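(* Let $d\ge1$, $\lambda>0$, $\delta>0$, and let $f:\mathbb{R}^d\to\mathbb{R}$ satisfy: (A1) $f$ is continuous and has at least one minimizer; (A2) $\int_{\mathbb{R}^d}\exp(-f(y)/\delta)\,dy<+\infty$; and let $f$ be $L$-smooth. Assume that for every $x\in\mathbb{R}^d$ the probability measure $\mu_x$ satisfies a Poincaré inequality with constant $C_P(\delta,x)<\infty$. Then for all $x\in\mathbb{R}^d$, \[\|\nabla f^{\lambda,\delta}(x)-\nabla f(x)\|\le L\lambda\|\nabla f^{\lambda,\delta}(x)\|+L\sqrt{d\,C_P(\delta,x)}.\] In particular, the ZOPPA sequence $(x^k)$ satisfies $\|\nabla f(x^k)\|\le(1+L\lambda)\|\nabla f^{\lambda,\delta}(x^k)\|+L\sqrt{d\,C_P(\delta,x^k)}$ for all $k$.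
   Context: $\mu_x$ is the probability measure on $\mathbb{R}^d$ with density proportional to $\exp\big(-\frac{1}{\delta}(f(y)+\frac{1}{2\lambda}\|x-y\|^2)\big)$. A probability measure $\mu$ satisfies a Poincaré inequality with constant $C_P>0$ if $\int|g-\int g\,d\mu|^2d\mu\le C_P\int\|\nabla g\|^2d\mu$ for every smooth, suitably integrable $g$. The soft Moreau envelope is $f^{\lambda,\delta}(x)=-\delta\log\mathbb{E}_{y\sim\mathcal N(x,\lambda\delta I)}[\exp(-f(y)/\delta)]$; the zeroth-order proximal operator is $\operatorname{zprox}^\delta_{\lambda,f}(x)=\dfrac{\mathbb{E}_{y\sim\mathcal N(x,\lambda\delta I)}[y\exp(-f(y)/\delta)]}{\mathbb{E}_{y\sim\mathcal N(x,\lambda\delta I)}[\exp(-f(y)/\delta)]}$. ZOPPA: $x^{k+1}=\operatorname{zprox}^\delta_{\lambda,f}(x^k)$ from any $x^0$. $L$-smooth means differentiable with $L$-Lipschitz gradient. *)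

theory Defs
  imports "HOL-Analysis.Analysis" "HOL-Probability.Probability"
begin

definition gauss_dens :: "real \<Rightarrow> real \<Rightarrow> 'a::euclidean_space \<Rightarrow> 'a \<Rightarrow> real" where
  "gauss_dens lam del x y =
     (2 * pi * lam * del) powr (- real DIM('a) / 2) * exp (- (norm (y - x))\<^sup>2 / (2 * lam * del))"

definition soft_moreau :: "('a::euclidean_space \<Rightarrow> real) \<Rightarrow> real \<Rightarrow> real \<Rightarrow> 'a \<Rightarrow> real" where
  "soft_moreau f lam del x =
     - del * ln (\<integral>y. gauss_dens lam del x y * exp (- f y / del) \<partial>lborel)"

definition zprox :: "('a::euclidean_space \<Rightarrow> real) \<Rightarrow> real \<Rightarrow> real \<Rightarrow> 'a \<Rightarrow> 'a" where
  "zprox f lam del x =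
     (1 / (\<integral>y. gauss_dens lam del x y * exp (- f y / del) \<partial>lborel)) *\<^sub>R
       (\<integral>y. (gauss_dens lam del x y * exp (- f y / del)) *\<^sub>R y \<partial>lborel)"

definition mu_weight :: "('a::euclidean_space \<Rightarrow> real) \<Rightarrow> real \<Rightarrow> real \<Rightarrow> 'a \<Rightarrow> 'a \<Rightarrow> real" where
  "mu_weight f lam del x y = exp (- (f y + (norm (x - y))\<^sup>2 / (2 * lam)) / del)"

definition mu :: "('a::euclidean_space \<Rightarrow> real) \<Rightarrow> real \<Rightarrow> real \<Rightarrow> 'a \<Rightarrow> 'a measure" where
  "mu f lam del x =
     density lborel (\<lambda>y. ennreal (mu_weight f lam del x y / (\<integral>z. mu_weight f lam del x z \<partial>lborel)))"

text \<open>Smooth (C^infinity) real functions: differentiable everywhere, and every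
  directional derivative is again smooth (greatest fixed point).\<close>
coinductive smooth_fun :: "('a::euclidean_space \<Rightarrow> real) \<Rightarrow> bool" where
  "(\<forall>y. g differentiable (at y)) \<Longrightarrow> (\<forall>v. smooth_fun (\<lambda>y. frechet_derivative g (at y) v))
    \<Longrightarrow> smooth_fun g"

definition fgrad :: "('a::euclidean_space \<Rightarrow> real) \<Rightarrow> 'a \<Rightarrow> 'a" where
  "fgrad g y = (\<Sum>b\<in>Basis. frechet_derivative g (at y) b *\<^sub>R b)"

definition poincare :: "'a::euclidean_space measure \<Rightarrow> real \<Rightarrow> bool" where
  "poincare M C \<longleftrightarrow> C > 0 \<and>
     (\<forall>g. smooth_fun g \<and> integrable M (\<lambda>y. (g y)\<^sup>2) \<and> integrable M (\<lambda>y. (norm (fgrad g y))\<^sup>2)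
        \<longrightarrow> (\<integral>y. (g y - (\<integral>z. g z \<partial>M))\<^sup>2 \<partial>M) \<le> C * (\<integral>y. (norm (fgrad g y))\<^sup>2 \<partial>M))"

end

theory Submission
  imports Defs
begin

text \<open>Write \<open>Z x\<close> for the integral of \<open>exp (- (f y + |x - y|^2 / (2 lam)) / del)\<close> over \<open>y\<close>, so
  that the soft Moreau envelope is \<open>- del * ln (Z x)\<close> up to a constant and \<open>mu_x\<close> is the
  normalised integrand. Shifting the centre \<open>x\<close> by \<open>t v\<close>, or translating the integration
  variable \<open>y\<close> by \<open>t v\<close> and using the descent lemma for \<open>f\<close>, turns the ratio
  \<open>Z (x + t v) / Z x\<close> into a \<open>mu_x\<close>-expectation of an exponential; Jensen's inequality then
  bounds the increments of the envelope from above up to \<open>O(t^2)\<close>. Hence any gradient \<open>g\<close> of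
  the envelope at \<open>x\<close> satisfies both \<open>g = (x - E y) / lam\<close> and \<open>g = E (grad f y)\<close>, with
  expectations under \<open>mu_x\<close>, and no differentiation under the integral sign is needed.
  Consequently \<open>|g - grad f x| \<le> L E |y - x| \<le> L (E |y - E y| + lam |g|)\<close>, and the Poincare
  inequality applied to the coordinate functions gives \<open>E |y - E y|^2 \<le> d C_P\<close>.\<close>

lemma gradient_inner_le_of_increment_le:
  fixes F :: "'a::real_inner \<Rightarrow> real"
  assumes F: "(F has_derivative (\<lambda>h. g \<bullet> h)) (at x)"
    and increment: "\<And>t. t > 0 \<Longrightarrow> F (x + t *\<^sub>R v) - F x \<le> t * a + t\<^sup>2 * c"
  shows "g \<bullet> v \<le> a"
proof -
  have "((\<lambda>t. x + t *\<^sub>R v) has_derivative (\<lambda>t. t *\<^sub>R v)) (at 0)"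
    by (auto intro!: derivative_eq_intros)
  from has_derivative_compose[OF this, of F "\<lambda>h. g \<bullet> h"]
  have "((\<lambda>t. F (x + t *\<^sub>R v)) has_derivative (\<lambda>t. g \<bullet> (t *\<^sub>R v))) (at 0)"
    using F by simp
  then have "((\<lambda>t. F (x + t *\<^sub>R v)) has_field_derivative g \<bullet> v) (at 0)"
    by (simp add: has_field_derivative_def mult.commute[of _ "g \<bullet> v"])
  then have "((\<lambda>t. (F (x + t *\<^sub>R v) - F x) / t) \<longlongrightarrow> g \<bullet> v) (at_right 0)"
    by (auto simp: has_field_derivative_iff intro: tendsto_mono[OF at_le])
  then have "((\<lambda>t. (F (x + t *\<^sub>R v) - F x) / t - t * c) \<longlongrightarrow> g \<bullet> v - 0 * c) (at_right 0)"
    by (intro tendsto_intros) auto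
  moreover have "eventually (\<lambda>t. (F (x + t *\<^sub>R v) - F x) / t - t * c \<le> a) (at_right (0::real))"
    unfolding eventually_at_filter
  proof (rule always_eventually, intro allI impI)
    fix t :: real assume "t \<noteq> 0" "t \<in> {0<..}"
    then have "t > 0" by simp
    then have "(F (x + t *\<^sub>R v) - F x) / t \<le> (t * a + t\<^sup>2 * c) / t"
      using increment by (simp add: divide_right_mono)
    also have "\<dots> = a + t * c" using \<open>t > 0\<close> by (simp add: field_simps power2_eq_square)
    finally show "(F (x + t *\<^sub>R v) - F x) / t - t * c \<le> a" by simp
  qed
  ultimately show ?thesis using tendsto_upperbound by fastforce
qed

lemma eq_of_inner_le:
  fixes g a :: "'a::real_inner"
  assumes "\<And>v. g \<bullet> v \<le> v \<bullet> a"
  shows "g = a"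
proof -
  have "(g - a) \<bullet> (g - a) \<le> 0"
    using assms[of "g - a"] by (simp add: inner_diff_left inner_commute)
  then show ?thesis by (metis antisym inner_ge_zero inner_eq_zero_iff right_minus_eq)
qed

lemma lipschitz_gradient_increment_le:
  fixes f :: "'a::real_inner \<Rightarrow> real"
  assumes grad: "\<And>x. (f has_derivative (\<lambda>h. Df x \<bullet> h)) (at x)"
    and lip: "L-lipschitz_on UNIV Df" and t: "t > 0"
  shows "f (y + t *\<^sub>R v) - f y \<le> t * (Df y \<bullet> v) + t\<^sup>2 * (L * (norm v)\<^sup>2)"
proof -
  have line: "((\<lambda>s. y + s *\<^sub>R v) has_derivative (\<lambda>h. h *\<^sub>R v)) (at s within {0..t})" for s
    by (auto intro!: derivative_eq_intros)
  have "((\<lambda>s. f (y + s *\<^sub>R v)) has_derivative (\<lambda>h. Df (y + s *\<^sub>R v) \<bullet> (h *\<^sub>R v))) (at s within {0..t})"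
    for s
    using has_derivative_in_compose[OF line grad[THEN has_derivative_at_withinI]] by (simp add: o_def)
  from mvt_simple[OF t this] obtain s where s: "s \<in> {0<..<t}"
    and mvt: "f (y + t *\<^sub>R v) - f y = t * (Df (y + s *\<^sub>R v) \<bullet> v)"
    by auto
  have "(Df (y + s *\<^sub>R v) - Df y) \<bullet> v \<le> norm (Df (y + s *\<^sub>R v) - Df y) * norm v"
    by (rule norm_cauchy_schwarz)
  also have "\<dots> \<le> L * (s * norm v) * norm v"
    using lipschitz_onD[OF lip, of "y + s *\<^sub>R v" y] s by (simp add: dist_norm mult_right_mono)
  also have "\<dots> \<le> L * (t * norm v) * norm v"
    using s lipschitz_on_nonneg[OF lip] by (auto intro!: mult_right_mono mult_left_mono)
  finally have "Df (y + s *\<^sub>R v) \<bullet> v \<le> Df y \<bullet> v + t * (L * (norm v)\<^sup>2)"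
    by (simp add: inner_diff_left power2_eq_square algebra_simps)
  with t have "t * (Df (y + s *\<^sub>R v) \<bullet> v) \<le> t * (Df y \<bullet> v + t * (L * (norm v)\<^sup>2))"
    by (intro mult_left_mono) auto
  then show ?thesis
    unfolding mvt by (simp add: power2_eq_square algebra_simps)
qed

lemma norm_le_one_plus_norm_sq: "norm y \<le> 1 + (norm y)\<^sup>2"
  using zero_le_power2[of "norm y - 1/2"] by (simp add: power2_diff power2_eq_square algebra_simps)

lemma norm_diff_sq_le: "(norm (y - a))\<^sup>2 \<le> 2 * (norm a)\<^sup>2 + 2 * (norm y)\<^sup>2"
proof -
  have "(norm (y - a))\<^sup>2 \<le> (norm y + norm a)\<^sup>2"
    by (simp add: norm_triangle_ineq4 power_mono)
  also have "\<dots> \<le> 2 * (norm a)\<^sup>2 + 2 * (norm y)\<^sup>2"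
    using zero_le_power2[of "norm y - norm a"] unfolding power2_sum power2_diff by linarith
  finally show ?thesis .
qed

lemma norm_sq_mult_exp_neg_le:
  fixes x y :: "'a::real_normed_vector"
  assumes c: "c > 0"
  shows "(norm y)\<^sup>2 * exp (- (norm (x - y))\<^sup>2 / c) \<le> 2 * (norm x)\<^sup>2 + 2 * c"
proof -
  define r where "r = norm (x - y)"
  define E where "E = exp (r\<^sup>2 / c)"
  have "(norm y)\<^sup>2 \<le> 2 * (norm x)\<^sup>2 + 2 * r\<^sup>2"
    using norm_diff_sq_le[of x "x - y"] by (simp add: r_def add.commute)
  also have "\<dots> \<le> 2 * (norm x)\<^sup>2 * E + 2 * (c * E)"
  proof (rule add_mono)
    have "1 \<le> E" using c by (simp add: E_def)
    from mult_left_mono[OF this, of "2 * (norm x)\<^sup>2"]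
    show "2 * (norm x)\<^sup>2 \<le> 2 * (norm x)\<^sup>2 * E" by simp
    show "2 * r\<^sup>2 \<le> 2 * (c * E)"
      using exp_ge_add_one_self[of "r\<^sup>2 / c"] c by (simp add: E_def field_simps)
  qed
  finally have "(norm y)\<^sup>2 \<le> (2 * (norm x)\<^sup>2 + 2 * c) * E"
    by (simp add: algebra_simps)
  then have "(norm y)\<^sup>2 * exp (- r\<^sup>2 / c) \<le> (2 * (norm x)\<^sup>2 + 2 * c) * E * exp (- r\<^sup>2 / c)"
    by (simp add: mult_right_mono)
  also have "\<dots> = 2 * (norm x)\<^sup>2 + 2 * c"
    by (simp add: E_def mult.assoc flip: exp_add)
  finally show ?thesis by (simp add: r_def)
qed

lemma weighted_exp_jensen:
  fixes w h G :: "'b \<Rightarrow> real"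
  assumes w: "integrable M w" and wh: "integrable M (\<lambda>y. w y * h y)" and G: "integrable M G"
    and w_nonneg: "\<And>y. 0 \<le> w y" and le: "\<And>y. w y * exp (- h y) \<le> G y"
    and w_pos: "integral\<^sup>L M w > 0"
  shows "integral\<^sup>L M w * exp (- integral\<^sup>L M (\<lambda>y. w y * h y) / integral\<^sup>L M w) \<le> integral\<^sup>L M G"
proof -
  define a where "a = integral\<^sup>L M (\<lambda>y. w y * h y) / integral\<^sup>L M w"
  \<comment> \<open>integrate the tangent line of \<open>exp \<circ> uminus\<close> at \<open>a\<close>\<close>
  have tangent: "w y * (exp (- a) * (1 + a) - exp (- a) * h y) \<le> G y" for y
  proof -
    have "exp (- a) * (1 + (a - h y)) \<le> exp (- a) * exp (a - h y)"
      by (simp add: exp_ge_add_one_self)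
    then have "exp (- a) * (1 + a) - exp (- a) * h y \<le> exp (- h y)"
      by (simp add: algebra_simps flip: exp_add)
    then show ?thesis
      using le[of y] w_nonneg[of y] by (meson mult_left_mono order_trans)
  qed
  have "integral\<^sup>L M (\<lambda>y. w y * (exp (- a) * (1 + a) - exp (- a) * h y))
      = exp (- a) * (1 + a) * integral\<^sup>L M w - exp (- a) * integral\<^sup>L M (\<lambda>y. w y * h y)"
    using w wh by (simp add: right_diff_distrib mult.left_commute[of "w _"])
  also have "\<dots> = integral\<^sup>L M w * exp (- a)"
    using w_pos by (simp add: a_def field_simps)
  finally show ?thesis
    using integral_mono[OF _ G tangent] w wh by (simp add: a_def right_diff_distrib mult.left_commute[of "w _"])
qed

lemma integrable_quadratic_growth:
  fixes M :: "'a::real_normed_vector measure"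
    and \<phi> :: "'a \<Rightarrow> 'b::{banach, second_countable_topology}"
  assumes "finite_measure M" and "integrable M (\<lambda>y. (norm y)\<^sup>2)" and "\<phi> \<in> borel_measurable M"
    and growth: "\<And>y. norm (\<phi> y) \<le> A + B * (norm y)\<^sup>2"
  shows "integrable M \<phi>"
proof (rule Bochner_Integration.integrable_bound)
  interpret finite_measure M by fact
  show "integrable M (\<lambda>y. A + B * (norm y)\<^sup>2)" using assms(2) by simp
  show "AE y in M. norm (\<phi> y) \<le> norm (A + B * (norm y)\<^sup>2)"
    using growth by (auto intro: order_trans[OF _ abs_ge_self])
qed fact

lemma (in prob_space) expectation_le_sqrt_second_moment:
  fixes X :: "'a \<Rightarrow> real"
  assumes [measurable]: "X \<in> borel_measurable M" and "integrable M (\<lambda>x. (X x)\<^sup>2)"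
  shows "expectation X \<le> sqrt (expectation (\<lambda>x. (X x)\<^sup>2))"
proof (rule real_le_rsqrt)
  have "integrable M X" using assms by (rule square_integrable_imp_integrable)
  then show "(expectation X)\<^sup>2 \<le> expectation (\<lambda>x. (X x)\<^sup>2)"
    using variance_eq[of X] variance_positive[of X] assms by simp
qed

lemma
  fixes \<phi> :: "'a::euclidean_space \<Rightarrow> real"
  assumes [measurable]: "\<phi> \<in> borel_measurable borel"
  shows integral_lborel_translate: "(\<integral>y. \<phi> (w + y) \<partial>lborel) = integral\<^sup>L lborel \<phi>"
    and integrable_lborel_translate: "integrable lborel \<phi> \<Longrightarrow> integrable lborel (\<lambda>y. \<phi> (w + y))"
  using integral_distr[of "(+) w" lborel borel \<phi>] integrable_distr_eq[of "(+) w" lborel borel \<phi>]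
  by (simp_all add: lborel_distr_plus)

lemma smooth_fun_inner_left: "smooth_fun (\<lambda>y. y \<bullet> b)"
proof -
  have "smooth_fun g" if "\<exists>b c. g = (\<lambda>y. y \<bullet> b + c)" for g :: "'a::euclidean_space \<Rightarrow> real"
    using that
  proof (coinduction arbitrary: g rule: smooth_fun.coinduct)
    case (smooth_fun g)
    then obtain b c where g: "g = (\<lambda>y. y \<bullet> b + c)" by blast
    have "(g has_derivative (\<lambda>h. h \<bullet> b)) (at y)" for y
      unfolding g by (auto intro!: derivative_eq_intros)
    then have "g differentiable at y" and "frechet_derivative g (at y) = (\<lambda>h. h \<bullet> b)" for y
      by (auto simp: differentiable_def frechet_derivative_at[symmetric])
    then have "\<forall>y. g differentiable at y"
      and "(\<lambda>y. frechet_derivative g (at y) v) = (\<lambda>y. y \<bullet> 0 + v \<bullet> b)" for v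
      by simp_all
    then show ?case by blast
  qed
  then show ?thesis by (metis add_0_right)
qed

lemma fgrad_inner_left: "fgrad (\<lambda>y. y \<bullet> b) y = (b::'a::euclidean_space)"
proof -
  have "((\<lambda>y. y \<bullet> b) has_derivative (\<lambda>h. h \<bullet> b)) (at y)"
    by (auto intro!: derivative_eq_intros)
  then have "frechet_derivative (\<lambda>y. y \<bullet> b) (at y) = (\<lambda>h. h \<bullet> b)"
    by (simp add: frechet_derivative_at[symmetric])
  then show ?thesis
    unfolding fgrad_def using euclidean_representation[of b] by (simp add: inner_commute)
qed

lemma poincare_variance_le:
  fixes M :: "'a::euclidean_space measure"
  assumes "prob_space M" and sets_M: "sets M = sets borel"
    and second_moment: "integrable M (\<lambda>y. (norm y)\<^sup>2)" and P: "poincare M C"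
  shows "(\<integral>y. (norm (y - (\<integral>z. z \<partial>M)))\<^sup>2 \<partial>M) \<le> real DIM('a) * C"
proof -
  interpret prob_space M by fact
  note sets_M [measurable_cong]
  define m where "m = (\<integral>z. z \<partial>M)"
  have "integrable M (\<lambda>y. y)"
    by (rule integrable_quadratic_growth[OF finite_measure_axioms second_moment, where A = 1 and B = 1])
      (simp_all add: norm_le_one_plus_norm_sq measurable_ident_sets sets_M)
  have coordinate_sq_le: "(z \<bullet> b)\<^sup>2 \<le> (norm z)\<^sup>2" if "b \<in> Basis" for z b
    using power_mono[OF Basis_le_norm[OF that, of z] abs_ge_zero, of 2] by simp
  have coordinate: "(\<integral>y. ((y - m) \<bullet> b)\<^sup>2 \<partial>M) \<le> C" if "b \<in> Basis" for b
  proof -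
    have "integrable M (\<lambda>y. (y \<bullet> b)\<^sup>2)"
      using coordinate_sq_le[OF that]
      by (intro integrable_quadratic_growth[OF finite_measure_axioms second_moment, where A = 0 and B = 1])
        auto
    with P[unfolded poincare_def, THEN conjunct2, rule_format, of "\<lambda>y. y \<bullet> b"]
    have "(\<integral>y. (y \<bullet> b - (\<integral>z. z \<bullet> b \<partial>M))\<^sup>2 \<partial>M) \<le> C * (\<integral>y. (norm b)\<^sup>2 \<partial>M)"
      by (simp add: smooth_fun_inner_left fgrad_inner_left)
    then show ?thesis
      using that \<open>integrable M (\<lambda>y. y)\<close> by (simp add: m_def inner_diff_left prob_space)
  qed
  have "integrable M (\<lambda>y. ((y - m) \<bullet> b)\<^sup>2)" if "b \<in> Basis" for b
  proof (rule integrable_quadratic_growth[OF finite_measure_axioms second_moment,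
        where A = "2 * (norm m)\<^sup>2" and B = 2])
    fix y
    have "((y - m) \<bullet> b)\<^sup>2 \<le> (norm (y - m))\<^sup>2"
      using coordinate_sq_le[OF that] .
    also have "\<dots> \<le> 2 * (norm m)\<^sup>2 + 2 * (norm y)\<^sup>2"
      by (rule norm_diff_sq_le)
    finally show "norm (((y - m) \<bullet> b)\<^sup>2) \<le> 2 * (norm m)\<^sup>2 + 2 * (norm y)\<^sup>2" by simp
  qed measurable
  moreover have "(norm z)\<^sup>2 = (\<Sum>b\<in>Basis. (z \<bullet> b)\<^sup>2)" for z :: 'a
    unfolding power2_norm_eq_inner using euclidean_inner[of z z] by (simp add: power2_eq_square)
  ultimately have "(\<integral>y. (norm (y - m))\<^sup>2 \<partial>M) = (\<Sum>b\<in>Basis. \<integral>y. ((y - m) \<bullet> b)\<^sup>2 \<partial>M)"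
    by (simp add: Bochner_Integration.integral_sum)
  also have "\<dots> \<le> (\<Sum>b\<in>(Basis::'a set). C)"
    by (rule sum_mono) (rule coordinate)
  finally show ?thesis by (simp add: m_def)
qed

locale soft_moreau_setting =
  fixes f :: "'a::euclidean_space \<Rightarrow> real" and lam del :: real
  assumes lam: "lam > 0" and del: "del > 0"
    and f_continuous: "continuous_on UNIV f"
    and exp_f_integrable: "(\<integral>\<^sup>+ y. ennreal (exp (- f y / del)) \<partial>lborel) < \<infinity>"
begin

abbreviation W :: "'a \<Rightarrow> 'a \<Rightarrow> real" where "W x y \<equiv> mu_weight f lam del x y"
abbreviation Z :: "'a \<Rightarrow> real" where "Z x \<equiv> \<integral>y. W x y \<partial>lborel"
abbreviation F :: "'a \<Rightarrow> real" where "F \<equiv> soft_moreau f lam del"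
abbreviation \<mu> :: "'a \<Rightarrow> 'a measure" where "\<mu> x \<equiv> mu f lam del x"

lemma f_measurable [measurable]: "f \<in> borel_measurable borel"
  using f_continuous by (rule borel_measurable_continuous_onI)

lemma W_measurable [measurable]: "W x \<in> borel_measurable borel"
  unfolding mu_weight_def by measurable

lemma W_pos: "W x y > 0"
  unfolding mu_weight_def by simp

lemma W_eq: "W x y = exp (- f y / del) * exp (- (norm (x - y))\<^sup>2 / (2 * lam * del))"
proof -
  have "- (f y + (norm (x - y))\<^sup>2 / (2 * lam)) / del
      = - f y / del + - (norm (x - y))\<^sup>2 / (2 * lam * del)"
    using lam del by (simp add: field_simps)
  then show ?thesis unfolding mu_weight_def by (simp flip: exp_add)
qed

lemma W_shift_center:
  "W (x + w) y = W x y * exp (- (2 * (w \<bullet> (x - y)) + (norm w)\<^sup>2) / (2 * lam * del))"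
proof -
  have "(norm (x + w - y))\<^sup>2 = (norm (x - y))\<^sup>2 + (2 * (w \<bullet> (x - y)) + (norm w)\<^sup>2)"
    unfolding power2_norm_eq_inner by (simp add: algebra_simps inner_commute)
  then have exponent: "- (norm (x + w - y))\<^sup>2 / (2 * lam * del)
      = - (norm (x - y))\<^sup>2 / (2 * lam * del) + - (2 * (w \<bullet> (x - y)) + (norm w)\<^sup>2) / (2 * lam * del)"
    by (simp only: minus_add_distrib add_divide_distrib)
  show ?thesis
    unfolding W_eq exponent by (simp only: exp_add mult.assoc)
qed

lemma W_shift_both: "W (x + w) (w + y) = W x y * exp (- (f (y + w) - f y) / del)"
proof -
  have "W (x + w) (w + y) = exp (- (f (y + w) + (norm (x - y))\<^sup>2 / (2 * lam)) / del)"
    unfolding mu_weight_def by (simp add: add.commute)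
  also have "\<dots> = W x y * exp (- (f (y + w) - f y) / del)"
    unfolding mu_weight_def by (simp add: diff_divide_distrib add_divide_distrib flip: exp_add)
  finally show ?thesis .
qed

lemma integrable_W_quadratic_growth:
  assumes [measurable]: "\<phi> \<in> borel_measurable borel" and B: "B \<ge> 0"
    and growth: "\<And>y. \<bar>\<phi> y\<bar> \<le> A + B * (norm y)\<^sup>2"
  shows "integrable lborel (\<lambda>y. W x y * \<phi> y)"
proof (rule Bochner_Integration.integrable_bound)
  define c where "c = 2 * lam * del"
  have c: "c > 0" using lam del by (simp add: c_def)
  define K where "K = \<bar>A\<bar> + B * (2 * (norm x)\<^sup>2 + 2 * c)"
  have "integrable lborel (\<lambda>y. exp (- f y / del))"
    using exp_f_integrable by (intro integrableI_bounded) auto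
  then show "integrable lborel (\<lambda>y. K * exp (- f y / del))" by simp
  show "AE y in lborel. norm (W x y * \<phi> y) \<le> norm (K * exp (- f y / del))"
  proof (rule AE_I2)
    fix y
    define e where "e = exp (- (norm (x - y))\<^sup>2 / c)"
    have e: "0 < e" "e \<le> 1" using c by (auto simp: e_def)
    \<comment> \<open>the Gaussian factor absorbs the quadratic growth of \<open>\<phi>\<close>\<close>
    have "\<bar>\<phi> y\<bar> \<le> \<bar>A\<bar> + B * (norm y)\<^sup>2"
      using growth[of y] abs_ge_self[of A] by linarith
    from mult_left_mono[OF this, of e]
    have "e * \<bar>\<phi> y\<bar> \<le> e * \<bar>A\<bar> + B * ((norm y)\<^sup>2 * e)"
      using e by (simp add: algebra_simps)
    also have "\<dots> \<le> K"
      unfolding K_def using e B norm_sq_mult_exp_neg_le[OF c, of y x]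
      by (intro add_mono mult_left_mono) (auto simp: e_def intro: mult_left_le_one_le)
    finally have "exp (- f y / del) * (e * \<bar>\<phi> y\<bar>) \<le> exp (- f y / del) * K"
      by simp
    moreover have "K \<ge> 0" using B c by (simp add: K_def)
    ultimately show "norm (W x y * \<phi> y) \<le> norm (K * exp (- f y / del))"
      using e by (simp add: W_eq c_def e_def abs_mult mult_ac)
  qed
qed measurable

lemma integrable_W: "integrable lborel (W x)"
  using integrable_W_quadratic_growth[of "\<lambda>_. 1" 0 1 x] by simp

lemma Z_pos: "Z x > 0"
proof -
  have "Z x \<noteq> 0"
  proof
    assume "Z x = 0"
    then have "AE y in lborel. W x y = 0"
      using integral_nonneg_eq_0_iff_AE[OF integrable_W] W_pos by (simp add: less_imp_le)
    moreover have "AE y in lborel. W x y = 0 \<longrightarrow> False"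
      using W_pos by (intro AE_I2) (metis less_irrefl)
    ultimately have "AE y in (lborel :: 'a measure). False"
      by (rule AE_mp)
    then show False
      by (simp add: eventually_False ae_filter_eq_bot_iff)
  qed
  then show ?thesis
    using W_pos by (simp add: less_imp_le order.not_eq_order_implies_strict integral_nonneg_AE)
qed

lemma sets_mu [measurable_cong]: "sets (\<mu> x) = sets borel"
  by (simp add: mu_def)

lemma borel_measurable_mu_iff: "g \<in> borel_measurable (\<mu> x) \<longleftrightarrow> g \<in> borel_measurable borel"
  by (simp add: measurable_cong_sets[OF sets_mu refl])

lemma prob_space_mu: "prob_space (\<mu> x)"
proof
  have "emeasure (\<mu> x) (space (\<mu> x)) = (\<integral>\<^sup>+ y. ennreal (W x y / Z x) \<partial>lborel)"
    by (simp add: mu_def emeasure_density)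
  also have "\<dots> = ennreal (\<integral>y. W x y / Z x \<partial>lborel)"
    using integrable_W W_pos Z_pos by (intro nn_integral_eq_integral) (auto simp: less_imp_le)
  also have "\<dots> = 1"
    using Z_pos[of x] by simp
  finally show "emeasure (\<mu> x) (space (\<mu> x)) = 1" .
qed

lemma integral_mu:
  assumes "\<phi> \<in> borel_measurable borel"
  shows "(\<integral>y. \<phi> y \<partial>\<mu> x) = (\<integral>y. W x y * \<phi> y \<partial>lborel) / Z x"
  unfolding mu_def using assms W_pos Z_pos[of x]
  by (subst integral_density) (auto simp: less_imp_le)

lemma integrable_mu_iff:
  assumes "\<phi> \<in> borel_measurable borel"
  shows "integrable (\<mu> x) \<phi> \<longleftrightarrow> integrable lborel (\<lambda>y. W x y * \<phi> y)"
proof -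
  have "integrable (\<mu> x) \<phi> \<longleftrightarrow> integrable lborel (\<lambda>y. W x y * \<phi> y * inverse (Z x))"
    unfolding mu_def using assms W_pos Z_pos[of x]
    by (subst integrable_density) (auto simp: less_imp_le divide_inverse mult_ac)
  then show ?thesis using Z_pos[of x] by simp
qed

lemma second_moment_mu: "integrable (\<mu> x) (\<lambda>y. (norm y)\<^sup>2)"
  by (subst integrable_mu_iff) (auto intro: integrable_W_quadratic_growth[where A = 0 and B = 1])

lemma integrable_mu_quadratic_growth:
  fixes \<phi> :: "'a \<Rightarrow> 'b::{banach, second_countable_topology}"
  assumes "\<phi> \<in> borel_measurable borel" and "\<And>y. norm (\<phi> y) \<le> A + B * (norm y)\<^sup>2"
  shows "integrable (\<mu> x) \<phi>"
  using prob_space.finite_measure[OF prob_space_mu] second_moment_mu _ assms(2)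
  by (rule integrable_quadratic_growth) (simp add: borel_measurable_mu_iff assms(1))

lemma soft_moreau_eq:
  "F x = - del * ln (Z x) - del * ln ((2 * pi * lam * del) powr (- real DIM('a) / 2))"
proof -
  define c where "c = (2 * pi * lam * del) powr (- real DIM('a) / 2)"
  have "c > 0" using lam del by (simp add: c_def)
  have "gauss_dens lam del x y * exp (- f y / del) = c * W x y" for y
    unfolding gauss_dens_def W_eq c_def by (simp add: norm_minus_commute mult_ac)
  then show ?thesis
    unfolding soft_moreau_def c_def[symmetric] using \<open>c > 0\<close> Z_pos[of x]
    by (simp add: ln_mult algebra_simps)
qed

lemma soft_moreau_increment_le:
  assumes h: "integrable (\<mu> x) h"
    and G: "integrable lborel G" "integral\<^sup>L lborel G = Z x'"
    and dominated: "\<And>y. W x y * exp (- h y) \<le> G y"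
  shows "F x' - F x \<le> del * (\<integral>y. h y \<partial>\<mu> x)"
proof -
  have [measurable]: "h \<in> borel_measurable borel"
    using borel_measurable_integrable[OF h] by (simp add: borel_measurable_mu_iff)
  have "integrable lborel (\<lambda>y. W x y * h y)"
    using h by (simp add: integrable_mu_iff)
  from weighted_exp_jensen[OF integrable_W this G(1) _ dominated Z_pos]
  have "Z x * exp (- (\<integral>y. h y \<partial>\<mu> x)) \<le> Z x'"
    using W_pos G(2) by (simp add: integral_mu less_imp_le)
  then have "ln (Z x) \<le> (\<integral>y. h y \<partial>\<mu> x) + ln (Z x')"
    using Z_pos[of x] Z_pos[of x'] by (simp add: ln_le_cancel_iff[symmetric] ln_mult)
  from mult_left_mono[OF this, of del] show ?thesis
    using del by (simp add: soft_moreau_eq algebra_simps)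
qed

lemma integrable_mu_id: "integrable (\<mu> x) (\<lambda>y. y)"
  using norm_le_one_plus_norm_sq by (intro integrable_mu_quadratic_growth[where A = 1 and B = 1]) auto

lemma gradient_inner_le_mean_displacement:
  assumes "(F has_derivative (\<lambda>h. g \<bullet> h)) (at x)"
  shows "g \<bullet> v \<le> v \<bullet> (x - (\<integral>y. y \<partial>\<mu> x)) / lam"
proof (rule gradient_inner_le_of_increment_le[OF assms])
  fix t :: real assume "t > 0"
  interpret prob_space "\<mu> x" by (rule prob_space_mu)
  define c where "c = 2 * lam * del"
  define h where "h y = (2 * ((t *\<^sub>R v) \<bullet> (x - y)) + (norm (t *\<^sub>R v))\<^sup>2) / c" for y
  have "integrable (\<mu> x) h"
    unfolding h_def using integrable_mu_id by (simp add: inner_diff_right)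
  then have "F (x + t *\<^sub>R v) - F x \<le> del * (\<integral>y. h y \<partial>\<mu> x)"
    by (rule soft_moreau_increment_le[OF _ integrable_W refl])
      (simp only: W_shift_center h_def c_def minus_divide_left order_refl)
  also have "\<dots> = del * ((2 * ((t *\<^sub>R v) \<bullet> (x - (\<integral>y. y \<partial>\<mu> x))) + (norm (t *\<^sub>R v))\<^sup>2) / c)"
    unfolding h_def using integrable_mu_id by (simp add: inner_diff_right prob_space)
  also have "\<dots> = t * (v \<bullet> (x - (\<integral>y. y \<partial>\<mu> x)) / lam) + t\<^sup>2 * ((norm v)\<^sup>2 / (2 * lam))"
    using lam del \<open>t > 0\<close> by (simp add: c_def field_simps power2_eq_square)
  finally show "F (x + t *\<^sub>R v) - F x
      \<le> t * (v \<bullet> (x - (\<integral>y. y \<partial>\<mu> x)) / lam) + t\<^sup>2 * ((norm v)\<^sup>2 / (2 * lam))" .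
qed

lemma diff_mean_eq_scaleR_gradient:
  assumes "(F has_derivative (\<lambda>h. g \<bullet> h)) (at x)"
  shows "x - (\<integral>y. y \<partial>\<mu> x) = lam *\<^sub>R g"
proof -
  have "g = (1 / lam) *\<^sub>R (x - (\<integral>y. y \<partial>\<mu> x))"
    using gradient_inner_le_mean_displacement[OF assms] by (intro eq_of_inner_le) simp
  then show ?thesis using lam by simp
qed

end

locale soft_moreau_lipschitz_gradient = soft_moreau_setting +
  fixes Df :: "'a \<Rightarrow> 'a" and L :: real
  assumes gradient: "\<And>x. (f has_derivative (\<lambda>h. Df x \<bullet> h)) (at x)"
    and lipschitz_gradient: "L-lipschitz_on UNIV Df"
begin

lemma L_nonneg: "L \<ge> 0"
  using lipschitz_gradient by (rule lipschitz_on_nonneg)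

lemma Df_measurable [measurable]: "Df \<in> borel_measurable borel"
  using lipschitz_on_continuous_on[OF lipschitz_gradient] by (rule borel_measurable_continuous_onI)

lemma norm_Df_diff_le: "norm (Df y - Df z) \<le> L * norm (y - z)"
  using lipschitz_onD[OF lipschitz_gradient, of y z] by (simp add: dist_norm)

lemma integrable_mu_Df: "integrable (\<mu> x) Df"
proof (rule integrable_mu_quadratic_growth[where A = "norm (Df 0) + L" and B = L])
  fix y
  have "norm (Df y) \<le> norm (Df 0) + L * norm y"
    using norm_Df_diff_le[of y 0] norm_triangle_sub[of "Df y" "Df 0"] by simp
  also have "\<dots> \<le> norm (Df 0) + L * (1 + (norm y)\<^sup>2)"
    using L_nonneg norm_le_one_plus_norm_sq[of y] by (simp add: mult_left_mono)
  finally show "norm (Df y) \<le> norm (Df 0) + L + L * (norm y)\<^sup>2"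
    by (simp add: algebra_simps)
qed measurable

lemma gradient_inner_le_mean_gradient:
  assumes "(F has_derivative (\<lambda>h. g \<bullet> h)) (at x)"
  shows "g \<bullet> v \<le> v \<bullet> (\<integral>y. Df y \<partial>\<mu> x)"
proof (rule gradient_inner_le_of_increment_le[OF assms])
  fix t :: real assume "t > 0"
  interpret prob_space "\<mu> x" by (rule prob_space_mu)
  define h where "h y = (t * (Df y \<bullet> v) + t\<^sup>2 * (L * (norm v)\<^sup>2)) / del" for y
  define G where "G y = W (x + t *\<^sub>R v) (t *\<^sub>R v + y)" for y
  have "integrable (\<mu> x) h"
    unfolding h_def using integrable_mu_Df by simp
  moreover have "integrable lborel G" and "integral\<^sup>L lborel G = Z (x + t *\<^sub>R v)"
    unfolding G_def using integrable_W
    by (auto intro: integrable_lborel_translate simp: integral_lborel_translate)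
  moreover have "W x y * exp (- h y) \<le> G y" for y
  proof -
    have "f (y + t *\<^sub>R v) - f y \<le> del * h y"
      using lipschitz_gradient_increment_le[OF gradient lipschitz_gradient \<open>t > 0\<close>] del
      by (simp add: h_def)
    then have "- h y \<le> - (f (y + t *\<^sub>R v) - f y) / del"
      using del by (simp add: field_simps)
    then show ?thesis
      unfolding G_def W_shift_both using W_pos[of x y] by simp
  qed
  ultimately have "F (x + t *\<^sub>R v) - F x \<le> del * (\<integral>y. h y \<partial>\<mu> x)"
    by (rule soft_moreau_increment_le)
  also have "\<dots> = t * (v \<bullet> (\<integral>y. Df y \<partial>\<mu> x)) + t\<^sup>2 * (L * (norm v)\<^sup>2)"
    unfolding h_def using integrable_mu_Df del by (simp add: prob_space inner_commute)
  finally show "F (x + t *\<^sub>R v) - F x \<le> t * (v \<bullet> (\<integral>y. Df y \<partial>\<mu> x)) + t\<^sup>2 * (L * (norm v)\<^sup>2)" .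
qed

lemma gradient_eq_mean_gradient:
  assumes "(F has_derivative (\<lambda>h. g \<bullet> h)) (at x)"
  shows "g = (\<integral>y. Df y \<partial>\<mu> x)"
  using gradient_inner_le_mean_gradient[OF assms] by (rule eq_of_inner_le)

lemma norm_gradient_diff_le:
  assumes "(F has_derivative (\<lambda>h. g \<bullet> h)) (at x)"
  shows "norm (g - Df x) \<le> L * (\<integral>y. norm (y - x) \<partial>\<mu> x)"
proof -
  interpret prob_space "\<mu> x" by (rule prob_space_mu)
  have distance_integrable: "integrable (\<mu> x) (\<lambda>y. norm (y - x))"
    using integrable_mu_id by (intro integrable_norm Bochner_Integration.integrable_diff) auto
  have "g - Df x = (\<integral>y. Df y - Df x \<partial>\<mu> x)"
    using gradient_eq_mean_gradient[OF assms] integrable_mu_Df by (simp add: prob_space)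
  then have "norm (g - Df x) \<le> (\<integral>y. norm (Df y - Df x) \<partial>\<mu> x)"
    by (simp add: integral_norm_bound)
  also have "\<dots> \<le> (\<integral>y. L * norm (y - x) \<partial>\<mu> x)"
    using integrable_mu_Df distance_integrable norm_Df_diff_le
    by (intro integral_mono integrable_norm Bochner_Integration.integrable_diff) auto
  finally show ?thesis by simp
qed

lemma mean_distance_le:
  assumes "(F has_derivative (\<lambda>h. g \<bullet> h)) (at x)" and "poincare (\<mu> x) C"
  shows "(\<integral>y. norm (y - x) \<partial>\<mu> x) \<le> lam * norm g + sqrt (real DIM('a) * C)"
proof -
  interpret prob_space "\<mu> x" by (rule prob_space_mu)
  define m where "m = (\<integral>y. y \<partial>\<mu> x)"
  have deviation_integrable: "integrable (\<mu> x) (\<lambda>y. norm (y - m))"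
    using integrable_mu_id by (intro integrable_norm Bochner_Integration.integrable_diff) auto
  have "norm (y - x) \<le> norm (y - m) + norm (x - m)" for y
    by (metis norm_diff_triangle_le norm_minus_commute order_refl)
  then have "(\<integral>y. norm (y - x) \<partial>\<mu> x) \<le> (\<integral>y. norm (y - m) + norm (x - m) \<partial>\<mu> x)"
    using integrable_mu_id deviation_integrable
    by (intro integral_mono integrable_norm Bochner_Integration.integrable_diff) auto
  also have "\<dots> = (\<integral>y. norm (y - m) \<partial>\<mu> x) + lam * norm g"
    using deviation_integrable diff_mean_eq_scaleR_gradient[OF assms(1)] lam by (simp add: m_def prob_space)
  also have "(\<integral>y. norm (y - m) \<partial>\<mu> x) \<le> sqrt (\<integral>y. (norm (y - m))\<^sup>2 \<partial>\<mu> x)"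
    using norm_diff_sq_le[of _ m]
    by (intro expectation_le_sqrt_second_moment integrable_mu_quadratic_growth) (auto simp: sets_mu)
  also have "\<dots> \<le> sqrt (real DIM('a) * C)"
    using poincare_variance_le[OF prob_space_mu sets_mu second_moment_mu assms(2)] by (simp add: m_def)
  finally show ?thesis by simp
qed

lemma soft_moreau_gradient_bound:
  assumes "(F has_derivative (\<lambda>h. g \<bullet> h)) (at x)" and "poincare (\<mu> x) C"
  shows "norm (g - Df x) \<le> L * lam * norm g + L * sqrt (real DIM('a) * C)"
  using norm_gradient_diff_le[OF assms(1)] mult_left_mono[OF mean_distance_le[OF assms] L_nonneg]
  by (simp add: algebra_simps)

end

theorem theorem11:
  fixes f :: "'a::euclidean_space \<Rightarrow> real"
    and Df :: "'a \<Rightarrow> 'a"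
    and lam del L :: real
    and Cp :: "'a \<Rightarrow> real"
    and xs :: "nat \<Rightarrow> 'a"
  assumes lam: "lam > 0" and del: "del > 0"
    and A1_cont: "continuous_on UNIV f"
    and A1_min: "\<exists>xstar. \<forall>y. f xstar \<le> f y"
    and A2: "(\<integral>\<^sup>+ y. ennreal (exp (- f y / del)) \<partial>lborel) < \<infinity>"
    and grad_f: "\<And>x. (f has_derivative (\<lambda>h. Df x \<bullet> h)) (at x)"
    and smooth_f: "L-lipschitz_on UNIV Df"
    and poinc: "\<And>x. poincare (mu f lam del x) (Cp x)"
    and zoppa: "\<And>k. xs (Suc k) = zprox f lam del (xs k)"
  shows "(\<forall>x g. (soft_moreau f lam del has_derivative (\<lambda>h. g \<bullet> h)) (at x) \<longrightarrow>
            norm (g - Df x) \<le> L * lam * norm g + L * sqrt (real DIM('a) * Cp x))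
       \<and> (\<forall>k g. (soft_moreau f lam del has_derivative (\<lambda>h. g \<bullet> h)) (at (xs k)) \<longrightarrow>
            norm (Df (xs k)) \<le> (1 + L * lam) * norm g + L * sqrt (real DIM('a) * Cp (xs k)))"
proof -
  interpret soft_moreau_lipschitz_gradient f lam del Df L
    by unfold_locales (fact lam del A1_cont A2 grad_f smooth_f)+
  have bound: "norm (g - Df x) \<le> L * lam * norm g + L * sqrt (real DIM('a) * Cp x)"
    if "(soft_moreau f lam del has_derivative (\<lambda>h. g \<bullet> h)) (at x)" for x g
    using soft_moreau_gradient_bound[OF that poinc] .
  moreover have "norm (Df x) \<le> (1 + L * lam) * norm g + L * sqrt (real DIM('a) * Cp x)"
    if "(soft_moreau f lam del has_derivative (\<lambda>h. g \<bullet> h)) (at x)" for x g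
    using bound[OF that] norm_triangle_sub[of "Df x" g] norm_minus_commute[of g "Df x"]
    by (simp add: algebra_simps)
  ultimately show ?thesis by blast
qed

end
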